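(* If $\langle A,\to\rangle$ is a conditional algebra, then its expanded Stone space $\langle\mathrm{Ul}(A),\tau_s,T_A\rangle$ is a conditional space.
   Context: A conditional algebra is a pair $\langle A,\to\rangle$ where $A$ is a Boolean algebra and $\to$ is a binary operation with, for all $a,b,c$: $a\to 1=1$; $(a\to b)\wedge(a\to c)=a\to(b\wedge c)$; $(a\vee b)\to c\le (a\to c)\wedge(b\to c)$. $\langle\mathrm{Ul}(A),\tau_s\rangle$ is the Stone space of $A$, $\varphi(a)=\{u:a\in u\}$; filters include the improper filter $A$, and $\varphi(F)=\{u:F\subseteq u\}$. $D^{\to}_X(Y)=\{b:\exists a\in Y,\ a\to b\in X\}$; $T_A(u,Z,v)$ iff there is a filter $F$ with $Z=\varphi(F)$ and $D^{\to}_u(F)\subseteq v$. A conditional space is a triple $\langle X,\tau,T\rangle$ where $\langle X,\tau\rangle$ is a Boolean (compact, Hausdorff, zero-dimensional) space and $T\subseteq X\times\mathcal{C}(\tau)\times X$ ($\mathcal{C}(\tau)$ the closed sets) satisfies: (T1) for every $x\in X$ and closed $Y$, $T(x,Y)=\{y:T(x,Y,y)\}$ is closed; (T2) for all clopen $U,V$, the set $U\to_T V=\{x:\text{for all } Z\subseteq U \text{ with } Z \text{ closed},\ T(x,Z)\subseteq V\}$ is clopen; (T3) for closed $Y$: $T(x,Y,y)$ iff $T(x,U,y)$ for every clopen $U\supseteq Y$. *)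

theory Defs
  imports "HOL-Analysis.Analysis"
begin

definition conditional_algebra :: "('a::boolean_algebra \<Rightarrow> 'a \<Rightarrow> 'a) \<Rightarrow> bool" where
  "conditional_algebra imp \<longleftrightarrow>
     (\<forall>a. imp a top = top) \<and>
     (\<forall>a b c. inf (imp a b) (imp a c) = imp a (inf b c)) \<and>
     (\<forall>a b c. imp (sup a b) c \<le> inf (imp a c) (imp b c))"

text \<open>Filters of a Boolean algebra (the improper filter UNIV is included).\<close>
definition ba_filter :: "'a::boolean_algebra set \<Rightarrow> bool" where
  "ba_filter F \<longleftrightarrow> top \<in> F \<and>
     (\<forall>a b. a \<in> F \<longrightarrow> a \<le> b \<longrightarrow> b \<in> F) \<and>
     (\<forall>a b. a \<in> F \<longrightarrow> b \<in> F \<longrightarrow> inf a b \<in> F)"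

definition ultrafilter :: "'a::boolean_algebra set \<Rightarrow> bool" where
  "ultrafilter u \<longleftrightarrow> ba_filter u \<and> bot \<notin> u \<and> (\<forall>a. a \<in> u \<or> - a \<in> u)"

definition Ul :: "'a::boolean_algebra set set" where
  "Ul = {u. ultrafilter u}"

definition phi :: "'a::boolean_algebra \<Rightarrow> 'a set set" where
  "phi a = {u \<in> Ul. a \<in> u}"

definition phiF :: "'a::boolean_algebra set \<Rightarrow> 'a set set" where
  "phiF F = {u \<in> Ul. F \<subseteq> u}"

text \<open>The Stone topology: generated by the sets phi a (topspace is Ul, since phi top = Ul).\<close>
definition stone_topology :: "'a::boolean_algebra set topology" where
  "stone_topology = topology_generated_by (range phi)"

definition D_imp :: "('a \<Rightarrow> 'a \<Rightarrow> 'a) \<Rightarrow> 'a set \<Rightarrow> 'a set \<Rightarrow> 'a set" where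
  "D_imp imp X Y = {b. \<exists>a\<in>Y. imp a b \<in> X}"

definition T_A :: "('a::boolean_algebra \<Rightarrow> 'a \<Rightarrow> 'a) \<Rightarrow> 'a set \<Rightarrow> 'a set set \<Rightarrow> 'a set \<Rightarrow> bool" where
  "T_A imp u Z v \<longleftrightarrow> u \<in> Ul \<and> v \<in> Ul \<and>
     (\<exists>F. ba_filter F \<and> Z = phiF F \<and> D_imp imp u F \<subseteq> v)"

definition clopenin :: "'x topology \<Rightarrow> 'x set \<Rightarrow> bool" where
  "clopenin \<tau> U \<longleftrightarrow> closedin \<tau> U \<and> openin \<tau> U"

definition boolean_space :: "'x topology \<Rightarrow> bool" where
  "boolean_space \<tau> \<longleftrightarrow> compact_space \<tau> \<and> Hausdorff_space \<tau> \<and>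
     (\<forall>W x. openin \<tau> W \<longrightarrow> x \<in> W \<longrightarrow> (\<exists>U. clopenin \<tau> U \<and> x \<in> U \<and> U \<subseteq> W))"

definition Tset :: "('x \<Rightarrow> 'x set \<Rightarrow> 'x \<Rightarrow> bool) \<Rightarrow> 'x \<Rightarrow> 'x set \<Rightarrow> 'x set" where
  "Tset T x Y = {y. T x Y y}"

definition arrow_T :: "'x topology \<Rightarrow> ('x \<Rightarrow> 'x set \<Rightarrow> 'x \<Rightarrow> bool) \<Rightarrow> 'x set \<Rightarrow> 'x set \<Rightarrow> 'x set" where
  "arrow_T \<tau> T U V = {x \<in> topspace \<tau>. \<forall>Z. closedin \<tau> Z \<longrightarrow> Z \<subseteq> U \<longrightarrow> Tset T x Z \<subseteq> V}"

definition conditional_space :: "'x topology \<Rightarrow> ('x \<Rightarrow> 'x set \<Rightarrow> 'x \<Rightarrow> bool) \<Rightarrow> bool" where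
  "conditional_space \<tau> T \<longleftrightarrow> boolean_space \<tau> \<and>
     \<comment> \<open>T is a subset of X x C(tau) x X\<close>
     (\<forall>x Y y. T x Y y \<longrightarrow> x \<in> topspace \<tau> \<and> closedin \<tau> Y \<and> y \<in> topspace \<tau>) \<and>
     \<comment> \<open>(T1)\<close>
     (\<forall>x Y. x \<in> topspace \<tau> \<longrightarrow> closedin \<tau> Y \<longrightarrow> closedin \<tau> (Tset T x Y)) \<and>
     \<comment> \<open>(T2)\<close>
     (\<forall>U V. clopenin \<tau> U \<longrightarrow> clopenin \<tau> V \<longrightarrow> clopenin \<tau> (arrow_T \<tau> T U V)) \<and>
     \<comment> \<open>(T3)\<close>
     (\<forall>x Y y. x \<in> topspace \<tau> \<longrightarrow> y \<in> topspace \<tau> \<longrightarrow> closedin \<tau> Y \<longrightarrow>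
        (T x Y y \<longleftrightarrow> (\<forall>U. clopenin \<tau> U \<longrightarrow> Y \<subseteq> U \<longrightarrow> T x U y)))"

end

theory Submission
  imports Defs
begin

text \<open>Stone duality identifies the closed sets of \<open>Ul(A)\<close> with the filters of \<open>A\<close>
  (a closed set \<open>Y\<close> is \<open>\<phi>(F)\<close> for \<open>F = {b. Y \<subseteq> \<phi>(b)}\<close>) and the clopen sets with the
  elements of \<open>A\<close>. Under this correspondence \<open>T\<^sub>A(u, \<phi>(F))\<close> is the closed set
  \<open>\<phi>(D\<^sub>u(F))\<close>, which is (T1). The axioms \<open>a \<rightarrow> 1 = 1\<close> and
  \<open>(a \<rightarrow> b) \<and> (a \<rightarrow> c) = a \<rightarrow> (b \<and> c)\<close> make \<open>{b. a \<rightarrow> b \<in> u}\<close> a filter, and the third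
  axiom (antitonicity in the antecedent) shows it is \<open>D\<^sub>u(\<up>a)\<close>; separating it from \<open>c\<close> by an
  ultrafilter yields \<open>\<phi>(a) \<rightarrow>\<^sub>T \<phi>(c) = \<phi>(a \<rightarrow> c)\<close>, which is (T2). Finally \<open>D\<^sub>u(F)\<close> is the
  union of the \<open>D\<^sub>u(\<up>a)\<close> with \<open>a \<in> F\<close>, and \<open>a \<in> F\<close> iff \<open>\<phi>(a) \<supseteq> \<phi>(F)\<close>, which is (T3).\<close>

section \<open>Filters and ultrafilters\<close>

lemma ba_filter_top: "ba_filter F \<Longrightarrow> top \<in> F"
  by (simp add: ba_filter_def)

lemma ba_filter_upward: "ba_filter F \<Longrightarrow> a \<in> F \<Longrightarrow> a \<le> b \<Longrightarrow> b \<in> F"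
  by (auto simp: ba_filter_def)

lemma ba_filter_inf: "ba_filter F \<Longrightarrow> a \<in> F \<Longrightarrow> b \<in> F \<Longrightarrow> inf a b \<in> F"
  by (auto simp: ba_filter_def)

lemma ba_filter_foldr_inf: "ba_filter F \<Longrightarrow> set xs \<subseteq> F \<Longrightarrow> foldr inf xs top \<in> F"
  by (induction xs) (auto intro: ba_filter_top ba_filter_inf)

definition principal_filter :: "'a::boolean_algebra \<Rightarrow> 'a set" where
  "principal_filter a = {b. a \<le> b}"

lemma ba_filter_principal_filter: "ba_filter (principal_filter a)"
  by (auto simp: ba_filter_def principal_filter_def)

text \<open>Finite meets are taken over lists, as \<open>boolean_algebra\<close> has no infinitary \<open>Inf\<close>.\<close>

definition generated_filter :: "'a::boolean_algebra set \<Rightarrow> 'a set" where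
  "generated_filter S = {b. \<exists>xs. set xs \<subseteq> S \<and> foldr inf xs top \<le> b}"

lemma foldr_inf_append:
  "foldr inf (xs @ ys) top = inf (foldr inf xs top) (foldr inf ys (top::'a::boolean_algebra))"
  by (induction xs) (simp_all add: inf_assoc)

lemma ba_filter_generated_filter: "ba_filter (generated_filter S)"
  unfolding ba_filter_def
proof (intro conjI allI impI)
  show "top \<in> generated_filter S"
    unfolding generated_filter_def by (intro CollectI exI[of _ "[]"]) simp
  fix a b
  show "b \<in> generated_filter S" if "a \<in> generated_filter S" "a \<le> b"
    using that order_trans unfolding generated_filter_def by blast
  show "inf a b \<in> generated_filter S" if a: "a \<in> generated_filter S" and b: "b \<in> generated_filter S"
  proof -
    obtain xs ys where xs: "set xs \<subseteq> S" "foldr inf xs top \<le> a"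
      and ys: "set ys \<subseteq> S" "foldr inf ys top \<le> b"
      using a b unfolding generated_filter_def by blast
    have "foldr inf (xs @ ys) top \<le> inf a b"
      unfolding foldr_inf_append using xs(2) ys(2) by (rule inf_mono)
    moreover have "set (xs @ ys) \<subseteq> S"
      using xs(1) ys(1) by simp
    ultimately show ?thesis
      unfolding generated_filter_def by blast
  qed
qed

lemma generated_filter_superset: "S \<subseteq> generated_filter S"
proof
  fix x assume "x \<in> S"
  then show "x \<in> generated_filter S"
    unfolding generated_filter_def by (intro CollectI exI[of _ "[x]"]) simp
qed

lemma foldr_inf_insert_ba_filter:
  assumes F: "ba_filter F" and xs: "set xs \<subseteq> insert c F"
  shows "\<exists>f\<in>F. inf c f \<le> foldr inf xs top"
  using xs
proof (induction xs)
  case Nil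
  then show ?case
    using ba_filter_top[OF F] by auto
next
  case (Cons x xs)
  then obtain f where f: "f \<in> F" "inf c f \<le> foldr inf xs top"
    by auto
  show ?case
  proof (cases "x = c")
    case True
    then show ?thesis
      using f by (auto intro: le_infI1)
  next
    case False
    then have "inf x f \<in> F"
      using Cons.prems f(1) ba_filter_inf[OF F] by auto
    moreover have "inf c (inf x f) \<le> inf x (foldr inf xs top)"
      using order_trans[OF inf_mono[OF order_refl inf_le2] f(2)] by (simp add: le_infI2)
    ultimately show ?thesis
      by auto
  qed
qed

lemma generated_filter_insert_proper:
  assumes F: "ba_filter F" and "- c \<notin> F"
  shows "bot \<notin> generated_filter (insert c F)"
proof
  assume "bot \<in> generated_filter (insert c F)"
  then obtain xs where "set xs \<subseteq> insert c F" "foldr inf xs top \<le> bot"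
    unfolding generated_filter_def by blast
  then obtain f where "f \<in> F" "inf c f \<le> bot"
    using foldr_inf_insert_ba_filter[OF F] order_trans by blast
  then have "f \<le> - c"
    by (metis bot_unique inf_commute inf_shunt)
  then show False
    using \<open>f \<in> F\<close> \<open>- c \<notin> F\<close> ba_filter_upward[OF F] by blast
qed

lemma Ul_ba_filter: "u \<in> Ul \<Longrightarrow> ba_filter u"
  by (simp add: Ul_def ultrafilter_def)

lemma Ul_bot: "u \<in> Ul \<Longrightarrow> bot \<notin> u"
  by (simp add: Ul_def ultrafilter_def)

lemma Ul_compl_iff:
  assumes u: "u \<in> Ul"
  shows "- a \<in> u \<longleftrightarrow> a \<notin> u"
proof
  assume "- a \<in> u"
  then show "a \<notin> u"
    using ba_filter_inf[OF Ul_ba_filter[OF u], of a "- a"] Ul_bot[OF u] by auto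
next
  assume "a \<notin> u"
  then show "- a \<in> u"
    using u by (auto simp: Ul_def ultrafilter_def)
qed

lemma Ul_inf_iff: "u \<in> Ul \<Longrightarrow> inf a b \<in> u \<longleftrightarrow> a \<in> u \<and> b \<in> u"
  by (meson Ul_ba_filter ba_filter_inf ba_filter_upward inf_le1 inf_le2)

lemma Ul_sup_iff: "u \<in> Ul \<Longrightarrow> sup a b \<in> u \<longleftrightarrow> a \<in> u \<or> b \<in> u"
  using Ul_inf_iff[of u "- a" "- b"] Ul_compl_iff[of u] by (metis compl_sup)

lemma Ul_subset_imp_eq:
  assumes u: "u \<in> Ul" and v: "v \<in> Ul" and "u \<subseteq> v"
  shows "u = v"
proof
  show "v \<subseteq> u"
  proof
    fix b assume "b \<in> v"
    then show "b \<in> u"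
      using \<open>u \<subseteq> v\<close> Ul_compl_iff[OF u, of b] Ul_compl_iff[OF v, of b] by blast
  qed
qed (rule \<open>u \<subseteq> v\<close>)

lemma ultrafilter_extension:
  assumes F: "ba_filter F" "bot \<notin> F"
  shows "\<exists>u\<in>Ul. F \<subseteq> u"
proof -
  let ?proper = "{G. ba_filter G \<and> bot \<notin> G \<and> F \<subseteq> G}"
  have "\<exists>M\<in>?proper. \<forall>G\<in>?proper. M \<subseteq> G \<longrightarrow> G = M"
  proof (rule subset_Zorn_nonempty)
    show "?proper \<noteq> {}"
      using F by auto
    fix C assume C: "C \<noteq> {}" "subset.chain ?proper C"
    then have CA: "C \<subseteq> ?proper" and chain: "\<And>X Y. X \<in> C \<Longrightarrow> Y \<in> C \<Longrightarrow> X \<subseteq> Y \<or> Y \<subseteq> X"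
      by (auto simp: subset.chain_def)
    have "ba_filter (\<Union>C)"
      unfolding ba_filter_def
    proof (intro conjI allI impI)
      show "top \<in> \<Union>C"
        using C CA ba_filter_top by blast
      fix a b
      show "b \<in> \<Union>C" if "a \<in> \<Union>C" "a \<le> b"
        using that CA ba_filter_upward by blast
      show "inf a b \<in> \<Union>C" if a: "a \<in> \<Union>C" and b: "b \<in> \<Union>C"
      proof -
        obtain X Y where "X \<in> C" "Y \<in> C" "a \<in> X" "b \<in> Y"
          using a b by auto
        then show ?thesis
          using chain[of X Y] CA ba_filter_inf by blast
      qed
    qed
    then show "\<Union>C \<in> ?proper"
      using C(1) CA by blast
  qed
  then obtain M where M: "M \<in> ?proper" and maximal: "\<forall>G\<in>?proper. M \<subseteq> G \<longrightarrow> G = M"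
    by (rule bexE)
  then have M_filter: "ba_filter M"
    by simp
  have "a \<in> M \<or> - a \<in> M" for a
  proof (rule ccontr)
    assume neither: "\<not> (a \<in> M \<or> - a \<in> M)"
    let ?G = "generated_filter (insert a M)"
    have "M \<subseteq> ?G"
      using generated_filter_superset by blast
    moreover have "?G \<in> ?proper"
      using generated_filter_insert_proper[OF M_filter] neither ba_filter_generated_filter M
        \<open>M \<subseteq> ?G\<close> by auto
    ultimately have "?G = M"
      using maximal by blast
    then show False
      using generated_filter_superset[of "insert a M"] neither by blast
  qed
  with M have "M \<in> Ul"
    by (simp add: Ul_def ultrafilter_def)
  then show ?thesis
    using M by blast
qed

lemma ultrafilter_separation:
  assumes F: "ba_filter F" and "a \<notin> F"
  shows "\<exists>u\<in>Ul. F \<subseteq> u \<and> a \<notin> u"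
proof -
  let ?G = "generated_filter (insert (- a) F)"
  have "bot \<notin> ?G"
    using generated_filter_insert_proper[OF F, of "- a"] \<open>a \<notin> F\<close> by simp
  then obtain u where u: "u \<in> Ul" "?G \<subseteq> u"
    using ultrafilter_extension ba_filter_generated_filter by blast
  then have "insert (- a) F \<subseteq> u"
    using generated_filter_superset by blast
  then show ?thesis
    using u(1) Ul_compl_iff by blast
qed

section \<open>The Stone space\<close>

lemma phi_subset_Ul: "phi a \<subseteq> Ul"
  by (auto simp: phi_def)

lemma phi_top: "phi top = Ul"
  using ba_filter_top Ul_ba_filter by (auto simp: phi_def)

lemma phi_bot: "phi bot = {}"
  using Ul_bot by (auto simp: phi_def)

lemma phi_inf: "phi (inf a b) = phi a \<inter> phi b"
  using Ul_inf_iff by (auto simp: phi_def)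

lemma phi_sup: "phi (sup a b) = phi a \<union> phi b"
  using Ul_sup_iff by (auto simp: phi_def)

lemma phi_compl: "phi (- a) = Ul - phi a"
  using Ul_compl_iff by (auto simp: phi_def)

lemma phi_mono: "a \<le> b \<Longrightarrow> phi a \<subseteq> phi b"
  using ba_filter_upward Ul_ba_filter by (auto simp: phi_def)

lemma phi_Union_finite: "finite S \<Longrightarrow> \<exists>a. phi a = \<Union>(phi ` S)"
proof (induction rule: finite_induct)
  case empty
  then show ?case
    using phi_bot by auto
next
  case (insert x S)
  then obtain a where "phi a = \<Union>(phi ` S)"
    by blast
  then show ?case
    using phi_sup[of x a] by auto
qed

lemma phiF_principal_filter: "phiF (principal_filter a) = phi a"
  unfolding phiF_def phi_def principal_filter_def using ba_filter_upward Ul_ba_filter by blast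

lemma phiF_subset_phi_iff:
  assumes "ba_filter F"
  shows "phiF F \<subseteq> phi a \<longleftrightarrow> a \<in> F"
  using ultrafilter_separation[OF assms, of a] by (auto simp: phiF_def phi_def)

lemma phiF_inject: "ba_filter F \<Longrightarrow> ba_filter G \<Longrightarrow> phiF F = phiF G \<Longrightarrow> F = G"
  using phiF_subset_phi_iff by blast

lemma topspace_stone_topology: "topspace stone_topology = Ul"
proof -
  have "\<Union>(range phi) = Ul"
    using phi_subset_Ul phi_top by blast
  then show ?thesis
    unfolding stone_topology_def by simp
qed

lemma openin_stone_topology_iff:
  "openin stone_topology W \<longleftrightarrow> W \<subseteq> Ul \<and> (\<forall>x\<in>W. \<exists>a. x \<in> phi a \<and> phi a \<subseteq> W)"
proof
  assume "openin stone_topology W"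
  then have "generate_topology_on (range phi) W"
    unfolding stone_topology_def by (rule openin_topology_generated_by)
  then show "W \<subseteq> Ul \<and> (\<forall>x\<in>W. \<exists>a. x \<in> phi a \<and> phi a \<subseteq> W)"
  proof induction
    case Empty
    show ?case by simp
  next
    case (Int V V')
    have "\<exists>c. x \<in> phi c \<and> phi c \<subseteq> V \<inter> V'" if x: "x \<in> V \<inter> V'" for x
    proof -
      obtain a b where "x \<in> phi a" "phi a \<subseteq> V" "x \<in> phi b" "phi b \<subseteq> V'"
        using Int.IH x by blast
      then show ?thesis
        by (intro exI[of _ "inf a b"]) (auto simp: phi_inf)
    qed
    moreover have "V \<inter> V' \<subseteq> Ul"
      using Int.IH by blast
    ultimately show ?case
      by blast
  next
    case (UN K)
    have "\<exists>a. x \<in> phi a \<and> phi a \<subseteq> \<Union>K" if x: "x \<in> \<Union>K" for x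
    proof -
      obtain V where V: "V \<in> K" "x \<in> V"
        using x by blast
      then obtain a where "x \<in> phi a" "phi a \<subseteq> V"
        using UN.IH by blast
      then show ?thesis
        using V(1) by blast
    qed
    moreover have "\<Union>K \<subseteq> Ul"
      by (meson UN.IH Union_least)
    ultimately show ?case
      by blast
  next
    case (Basis V)
    then show ?case
      using phi_subset_Ul by auto
  qed
next
  assume W: "W \<subseteq> Ul \<and> (\<forall>x\<in>W. \<exists>a. x \<in> phi a \<and> phi a \<subseteq> W)"
  then have "\<Union>{phi a | a. phi a \<subseteq> W} = W"
    by blast
  moreover have "generate_topology_on (range phi) (\<Union>{phi a | a. phi a \<subseteq> W})"
    by (rule generate_topology_on.UN) (auto intro: generate_topology_on.Basis)
  ultimately show "openin stone_topology W"
    by (simp add: stone_topology_def openin_topology_generated_by_iff)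
qed

lemma openin_phi: "openin stone_topology (phi a)"
  using phi_subset_Ul by (auto simp: openin_stone_topology_iff)

lemma closedin_phi: "closedin stone_topology (phi a)"
  using openin_phi[of "- a"] phi_subset_Ul
  by (simp add: closedin_def topspace_stone_topology phi_compl Diff_Diff_Int Int_absorb1)

lemma clopenin_phi: "clopenin stone_topology (phi a)"
  by (simp add: clopenin_def openin_phi closedin_phi)

lemma closedin_phiF: "closedin stone_topology (phiF F)"
proof -
  have "Ul - phiF F = (\<Union>a\<in>F. phi (- a))"
    by (auto simp: phiF_def phi_def Ul_compl_iff)
  then have "openin stone_topology (Ul - phiF F)"
    using openin_phi by auto
  then show ?thesis
    by (auto simp: closedin_def topspace_stone_topology phiF_def)
qed

lemma closedin_eq_phiF:
  assumes Y: "closedin stone_topology Y"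
  shows "Y = phiF {b. Y \<subseteq> phi b}"
proof
  have "Y \<subseteq> Ul"
    using closedin_subset[OF Y] by (simp add: topspace_stone_topology)
  then show "Y \<subseteq> phiF {b. Y \<subseteq> phi b}"
    by (auto simp: phiF_def phi_def)
  show "phiF {b. Y \<subseteq> phi b} \<subseteq> Y"
  proof
    fix v assume v: "v \<in> phiF {b. Y \<subseteq> phi b}"
    show "v \<in> Y"
    proof (rule ccontr)
      assume "v \<notin> Y"
      then have "v \<in> Ul - Y"
        using v by (auto simp: phiF_def)
      moreover have "openin stone_topology (Ul - Y)"
        using Y by (simp add: closedin_def topspace_stone_topology)
      ultimately obtain a where a: "v \<in> phi a" "phi a \<subseteq> Ul - Y"
        unfolding openin_stone_topology_iff by blast
      then have "Y \<subseteq> phi (- a)"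
        using \<open>Y \<subseteq> Ul\<close> phi_compl by auto
      then show False
        using v a(1) Ul_compl_iff by (auto simp: phiF_def phi_def)
    qed
  qed
qed

lemma ba_filter_phi_supersets: "Y \<subseteq> Ul \<Longrightarrow> ba_filter {b. Y \<subseteq> phi b}"
  unfolding ba_filter_def by (auto simp: phi_top phi_inf) (use phi_mono in blast)

lemma closedin_stone_topology_iff:
  "closedin stone_topology Y \<longleftrightarrow> (\<exists>F. ba_filter F \<and> Y = phiF F)"
proof
  assume Y: "closedin stone_topology Y"
  then have "Y \<subseteq> Ul"
    using closedin_subset by (fastforce simp: topspace_stone_topology)
  then show "\<exists>F. ba_filter F \<and> Y = phiF F"
    using closedin_eq_phiF[OF Y] ba_filter_phi_supersets by blast
qed (auto simp: closedin_phiF)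

lemma Ul_finite_subcover:
  assumes cover: "Ul \<subseteq> \<Union>(phi ` S)"
  shows "\<exists>S'. finite S' \<and> S' \<subseteq> S \<and> Ul \<subseteq> \<Union>(phi ` S')"
proof (rule ccontr)
  txt \<open>Otherwise the complements of the elements of \<open>S\<close> generate a proper filter, and an
    ultrafilter containing it lies in no \<open>phi a\<close> with \<open>a \<in> S\<close>.\<close>
  assume no_subcover: "\<not> ?thesis"
  let ?G = "generated_filter (uminus ` S)"
  have "bot \<notin> ?G"
  proof
    assume "bot \<in> ?G"
    then obtain xs where xs: "set xs \<subseteq> uminus ` S" "foldr inf xs top \<le> bot"
      unfolding generated_filter_def by blast
    have "uminus ` set xs \<subseteq> S"
      using xs(1) by auto
    then have "\<not> Ul \<subseteq> \<Union>(phi ` uminus ` set xs)"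
      using no_subcover by (meson List.finite_set finite_imageI)
    then obtain u where u: "u \<in> Ul" "u \<notin> \<Union>(phi ` uminus ` set xs)"
      by blast
    then have "set xs \<subseteq> u"
      by (auto simp: phi_def Ul_compl_iff)
    then have "bot \<in> u"
      using ba_filter_foldr_inf ba_filter_upward Ul_ba_filter u(1) xs(2) by blast
    then show False
      using Ul_bot u(1) by blast
  qed
  then obtain v where v: "v \<in> Ul" "?G \<subseteq> v"
    using ultrafilter_extension ba_filter_generated_filter by blast
  then obtain a where "a \<in> S" "a \<in> v"
    using cover by (auto simp: phi_def)
  moreover have "- a \<in> v"
    using \<open>a \<in> S\<close> v(2) generated_filter_superset by blast
  ultimately show False
    using Ul_compl_iff[OF v(1)] by blast
qed

lemma compact_space_stone_topology: "compact_space stone_topology"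
  unfolding compact_space_def compactin_def topspace_stone_topology
proof (intro conjI allI impI)
  fix \<U> :: "'a set set set"
  assume \<U>: "(\<forall>W\<in>\<U>. openin stone_topology W) \<and> Ul \<subseteq> \<Union>\<U>"
  define S where "S = {a. \<exists>W\<in>\<U>. phi a \<subseteq> W}"
  have "Ul \<subseteq> \<Union>(phi ` S)"
  proof
    fix x :: "'a set"
    assume "x \<in> Ul"
    then obtain V where V: "V \<in> \<U>" "x \<in> V"
      using \<U> by blast
    moreover have "openin stone_topology V"
      using \<U> V(1) by blast
    ultimately obtain a where "x \<in> phi a" "phi a \<subseteq> V"
      unfolding openin_stone_topology_iff by blast
    then show "x \<in> \<Union>(phi ` S)"
      using V(1) unfolding S_def by blast
  qed
  then obtain S' where S': "finite S'" "S' \<subseteq> S" "Ul \<subseteq> \<Union>(phi ` S')"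
    by (elim Ul_finite_subcover[THEN exE]) auto
  have "\<forall>a\<in>S'. \<exists>W. W \<in> \<U> \<and> phi a \<subseteq> W"
    using S'(2) unfolding S_def by blast
  then have "\<exists>W. \<forall>a\<in>S'. W a \<in> \<U> \<and> phi a \<subseteq> W a"
    by (rule bchoice)
  then obtain W where W: "\<forall>a\<in>S'. W a \<in> \<U> \<and> phi a \<subseteq> W a"
    by blast
  show "\<exists>\<F>. finite \<F> \<and> \<F> \<subseteq> \<U> \<and> Ul \<subseteq> \<Union>\<F>"
  proof (intro exI conjI)
    show "finite (W ` S')"
      using S'(1) by simp
    show "W ` S' \<subseteq> \<U>"
      using W by blast
    show "Ul \<subseteq> \<Union>(W ` S')"
    proof
      fix x :: "'a set"
      assume "x \<in> Ul"
      then obtain a where "a \<in> S'" "x \<in> phi a"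
        using S'(3) by blast
      then show "x \<in> \<Union>(W ` S')"
        using W by blast
    qed
  qed
qed simp

lemma Hausdorff_space_stone_topology: "Hausdorff_space stone_topology"
  unfolding Hausdorff_space_def topspace_stone_topology
proof (intro allI impI)
  fix x y :: "'a set"
  assume xy: "x \<in> Ul \<and> y \<in> Ul \<and> x \<noteq> y"
  then have "\<not> x \<subseteq> y"
    using Ul_subset_imp_eq by blast
  then obtain a where "a \<in> x" "a \<notin> y"
    by blast
  then have "x \<in> phi a" "y \<in> phi (- a)"
    using xy by (auto simp: phi_def Ul_compl_iff)
  moreover have "disjnt (phi a) (phi (- a))"
    by (simp add: phi_compl disjnt_def)
  ultimately show "\<exists>U V. openin stone_topology U \<and> openin stone_topology V \<and> x \<in> U \<and> y \<in> V \<and> disjnt U V"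
    using openin_phi by blast
qed

lemma boolean_space_stone_topology: "boolean_space stone_topology"
proof -
  have "\<exists>U. clopenin stone_topology U \<and> x \<in> U \<and> U \<subseteq> W"
    if "openin stone_topology W" "x \<in> W" for W x
    using that clopenin_phi unfolding openin_stone_topology_iff by blast
  then show ?thesis
    unfolding boolean_space_def using compact_space_stone_topology Hausdorff_space_stone_topology
    by blast
qed

lemma clopenin_stone_topology_iff: "clopenin stone_topology U \<longleftrightarrow> (\<exists>a. U = phi a)"
proof
  assume U: "clopenin stone_topology U"
  then have "compactin stone_topology U"
    using closedin_compact_space compact_space_stone_topology clopenin_def by blast
  then have finite_subcover: "\<And>\<C>. \<forall>W\<in>\<C>. openin stone_topology W \<Longrightarrow> U \<subseteq> \<Union>\<C> \<Longrightarrow>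
      \<exists>\<F>. finite \<F> \<and> \<F> \<subseteq> \<C> \<and> U \<subseteq> \<Union>\<F>"
    unfolding compactin_def by blast
  have "\<forall>W\<in>phi ` {a. phi a \<subseteq> U}. openin stone_topology W"
    using openin_phi by blast
  moreover have "U \<subseteq> \<Union>(phi ` {a. phi a \<subseteq> U})"
    using U unfolding clopenin_def openin_stone_topology_iff by blast
  ultimately obtain \<F> where \<F>: "finite \<F>" "\<F> \<subseteq> phi ` {a. phi a \<subseteq> U}" "U \<subseteq> \<Union>\<F>"
    by (elim finite_subcover[THEN exE]) auto
  then obtain S where "finite S" "S \<subseteq> {a. phi a \<subseteq> U}" "\<F> = phi ` S"
    using finite_subset_image[OF \<F>(1,2)] by blast
  then have "finite S" "U = \<Union>(phi ` S)"
    using \<F>(3) by blast+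
  then show "\<exists>a. U = phi a"
    using phi_Union_finite by metis
next
  assume "\<exists>a. U = phi a"
  then show "clopenin stone_topology U"
    using clopenin_phi by blast
qed

section \<open>The relation \<open>T\<^sub>A\<close>\<close>

lemma conditional_algebra_imp_top: "conditional_algebra imp \<Longrightarrow> imp a top = top"
  by (simp add: conditional_algebra_def)

lemma conditional_algebra_imp_inf:
  "conditional_algebra imp \<Longrightarrow> inf (imp a b) (imp a c) = imp a (inf b c)"
  by (simp add: conditional_algebra_def)

lemma conditional_algebra_imp_mono_right:
  "conditional_algebra imp \<Longrightarrow> b \<le> c \<Longrightarrow> imp a b \<le> imp a c"
  by (metis conditional_algebra_imp_inf inf.absorb_iff1 inf.orderI)

lemma conditional_algebra_imp_antimono_left:
  assumes "conditional_algebra imp" "a \<le> a'"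
  shows "imp a' c \<le> imp a c"
proof -
  have "imp (sup a a') c \<le> inf (imp a c) (imp a' c)"
    using assms(1) by (simp add: conditional_algebra_def)
  then show ?thesis
    using assms(2) by (simp add: sup_absorb2)
qed

lemma ba_filter_consequents:
  assumes imp: "conditional_algebra imp" and u: "u \<in> Ul"
  shows "ba_filter {b. imp a b \<in> u}"
  unfolding ba_filter_def
proof (intro conjI allI impI)
  show "top \<in> {b. imp a b \<in> u}"
    using ba_filter_top[OF Ul_ba_filter[OF u]] by (simp add: conditional_algebra_imp_top[OF imp])
  fix b c
  show "c \<in> {b. imp a b \<in> u}" if "b \<in> {b. imp a b \<in> u}" "b \<le> c"
    using that conditional_algebra_imp_mono_right[OF imp] ba_filter_upward[OF Ul_ba_filter[OF u]]
    by blast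
  show "inf b c \<in> {b. imp a b \<in> u}" if "b \<in> {b. imp a b \<in> u}" "c \<in> {b. imp a b \<in> u}"
    using that ba_filter_inf[OF Ul_ba_filter[OF u]]
    by (simp flip: conditional_algebra_imp_inf[OF imp])
qed

lemma D_imp_principal_filter:
  assumes "conditional_algebra imp" "u \<in> Ul"
  shows "D_imp imp u (principal_filter a) = {b. imp a b \<in> u}"
  using assms conditional_algebra_imp_antimono_left ba_filter_upward Ul_ba_filter
  unfolding D_imp_def principal_filter_def by blast

lemma D_imp_eq_Union: "D_imp imp u F = (\<Union>a\<in>F. {b. imp a b \<in> u})"
  by (auto simp: D_imp_def)

lemma T_A_phiF_iff:
  assumes "ba_filter F"
  shows "T_A imp u (phiF F) v \<longleftrightarrow> u \<in> Ul \<and> v \<in> Ul \<and> D_imp imp u F \<subseteq> v"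
  using assms phiF_inject unfolding T_A_def by blast

lemma T_A_phi_iff:
  assumes "conditional_algebra imp"
  shows "T_A imp u (phi a) v \<longleftrightarrow> u \<in> Ul \<and> v \<in> Ul \<and> {b. imp a b \<in> u} \<subseteq> v"
proof -
  have "T_A imp u (phi a) v \<longleftrightarrow> u \<in> Ul \<and> v \<in> Ul \<and> D_imp imp u (principal_filter a) \<subseteq> v"
    using T_A_phiF_iff[OF ba_filter_principal_filter, of imp u a v]
    by (simp add: phiF_principal_filter)
  then show ?thesis
    using D_imp_principal_filter[OF assms] by auto
qed

lemma Tset_T_A_phiF:
  assumes "u \<in> Ul" "ba_filter F"
  shows "Tset (T_A imp) u (phiF F) = phiF (D_imp imp u F)"
  using assms(1) T_A_phiF_iff[OF assms(2), of imp u] unfolding Tset_def by (auto simp: phiF_def)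

lemma closedin_Tset_T_A:
  assumes "u \<in> Ul" "closedin stone_topology Y"
  shows "closedin stone_topology (Tset (T_A imp) u Y)"
proof -
  obtain F where "ba_filter F" "Y = phiF F"
    using assms(2) closedin_stone_topology_iff by blast
  then show ?thesis
    using assms(1) by (simp add: Tset_T_A_phiF closedin_phiF)
qed

lemma arrow_T_phi:
  assumes imp: "conditional_algebra imp"
  shows "arrow_T stone_topology (T_A imp) (phi a) (phi c) = phi (imp a c)"
proof -
  have "(\<forall>Z. closedin stone_topology Z \<longrightarrow> Z \<subseteq> phi a \<longrightarrow> Tset (T_A imp) u Z \<subseteq> phi c)
      \<longleftrightarrow> imp a c \<in> u" if u: "u \<in> Ul" for u
  proof
    assume "\<forall>Z. closedin stone_topology Z \<longrightarrow> Z \<subseteq> phi a \<longrightarrow> Tset (T_A imp) u Z \<subseteq> phi c"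
    then have "Tset (T_A imp) u (phi a) \<subseteq> phi c"
      using closedin_phi by blast
    then have "\<forall>v\<in>Ul. {b. imp a b \<in> u} \<subseteq> v \<longrightarrow> c \<in> v"
      using u unfolding Tset_def T_A_phi_iff[OF imp] by (auto simp: phi_def)
    then show "imp a c \<in> u"
      using ultrafilter_separation[OF ba_filter_consequents[OF imp u]] by blast
  next
    assume "imp a c \<in> u"
    show "\<forall>Z. closedin stone_topology Z \<longrightarrow> Z \<subseteq> phi a \<longrightarrow> Tset (T_A imp) u Z \<subseteq> phi c"
    proof (intro allI impI)
      fix Z assume "closedin stone_topology Z" "Z \<subseteq> phi a"
      then obtain F where F: "ba_filter F" "Z = phiF F" "a \<in> F"
        using closedin_stone_topology_iff phiF_subset_phi_iff by metis
      then have "c \<in> D_imp imp u F"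
        using \<open>imp a c \<in> u\<close> by (auto simp: D_imp_def)
      then show "Tset (T_A imp) u Z \<subseteq> phi c"
        using F u by (simp add: Tset_T_A_phiF) (auto simp: phiF_def phi_def)
    qed
  qed
  then show ?thesis
    unfolding arrow_T_def topspace_stone_topology by (auto simp: phi_def)
qed

lemma T_A_iff_clopen_supersets:
  assumes imp: "conditional_algebra imp" and "u \<in> Ul" "v \<in> Ul"
    and Y: "closedin stone_topology Y"
  shows "T_A imp u Y v \<longleftrightarrow> (\<forall>U. clopenin stone_topology U \<longrightarrow> Y \<subseteq> U \<longrightarrow> T_A imp u U v)"
proof -
  obtain F where F: "ba_filter F" "Y = phiF F"
    using Y closedin_stone_topology_iff by blast
  have "T_A imp u Y v \<longleftrightarrow> (\<forall>a\<in>F. {b. imp a b \<in> u} \<subseteq> v)"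
    using assms F by (auto simp: T_A_phiF_iff D_imp_eq_Union)
  also have "\<dots> \<longleftrightarrow> (\<forall>a. Y \<subseteq> phi a \<longrightarrow> T_A imp u (phi a) v)"
    using assms F by (auto simp: phiF_subset_phi_iff T_A_phi_iff)
  also have "\<dots> \<longleftrightarrow> (\<forall>U. clopenin stone_topology U \<longrightarrow> Y \<subseteq> U \<longrightarrow> T_A imp u U v)"
    by (auto simp: clopenin_stone_topology_iff)
  finally show ?thesis .
qed

theorem theorem5p4:
  fixes imp :: "'a::boolean_algebra \<Rightarrow> 'a \<Rightarrow> 'a"
  assumes "conditional_algebra imp"
  shows "conditional_space (stone_topology :: 'a set topology) (T_A imp)"
  unfolding conditional_space_def topspace_stone_topology
proof (intro conjI allI impI)
  show "boolean_space (stone_topology :: 'a set topology)"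
    by (rule boolean_space_stone_topology)
  fix x y :: "'a set" and Y :: "'a set set"
  assume T: "T_A imp x Y y"
  then show "x \<in> Ul" "y \<in> Ul"
    by (simp_all add: T_A_def)
  from T obtain F where "Y = phiF F"
    unfolding T_A_def by blast
  then show "closedin stone_topology Y"
    by (simp add: closedin_phiF)
next
  fix x :: "'a set" and Y :: "'a set set"
  assume "x \<in> Ul" "closedin stone_topology Y"
  then show "closedin stone_topology (Tset (T_A imp) x Y)"
    by (rule closedin_Tset_T_A)
next
  fix U V :: "'a set set"
  assume "clopenin stone_topology U" "clopenin stone_topology V"
  then obtain a c where "U = phi a" "V = phi c"
    unfolding clopenin_stone_topology_iff by blast
  then show "clopenin stone_topology (arrow_T stone_topology (T_A imp) U V)"
    by (simp add: arrow_T_phi[OF assms] clopenin_phi)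
next
  fix x y :: "'a set" and Y :: "'a set set"
  assume "x \<in> Ul" "y \<in> Ul" "closedin stone_topology Y"
  then show "T_A imp x Y y \<longleftrightarrow> (\<forall>U. clopenin stone_topology U \<longrightarrow> Y \<subseteq> U \<longrightarrow> T_A imp x U y)"
    by (rule T_A_iff_clopen_supersets[OF assms])
qed

end
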